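(* There is a constant $c>0$ such that for all $n$, any family of pairwise disjoint $[1,n]$-rectangles whose union is $\mathcal{L}_n$ has at least $2^{cn}$ members.
   Context: $X=\{x_1,\dots,x_n\}$, $Y=\{y_1,\dots,y_n\}$, $Z=X\cup Y$. $\mathcal{L}_n=\{U\subseteq Z : \exists i\in[n],\ x_i\in U,\ y_i\in U\}$. A $[1,n]$-rectangle is a family $S\times T=\{U\cup V: U\in S, V\in T\}$ with $S\subseteq\mathcal{P}(X)$ and $T\subseteq\mathcal{P}(Y)$. *)

theory Defs
  imports Complex_Main
begin

text \<open>Ground set Z = X \<union> Y, with x_i encoded as Inl i and y_i as Inr i, i \<in> {1..n}.\<close>

definition Xs :: "nat \<Rightarrow> (nat + nat) set" where
  "Xs n = Inl ` {1..n}"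

definition Ys :: "nat \<Rightarrow> (nat + nat) set" where
  "Ys n = Inr ` {1..n}"

definition Zs :: "nat \<Rightarrow> (nat + nat) set" where
  "Zs n = Xs n \<union> Ys n"

definition Lfam :: "nat \<Rightarrow> (nat + nat) set set" where
  "Lfam n = {U. U \<subseteq> Zs n \<and> (\<exists>i\<in>{1..n}. Inl i \<in> U \<and> Inr i \<in> U)}"

definition rect_prod :: "'a set set \<Rightarrow> 'a set set \<Rightarrow> 'a set set" where
  "rect_prod S T = {U \<union> V | U V. U \<in> S \<and> V \<in> T}"

definition is_rect :: "nat \<Rightarrow> (nat + nat) set set \<Rightarrow> bool" where
  "is_rect n R \<longleftrightarrow> (\<exists>S T. S \<subseteq> Pow (Xs n) \<and> T \<subseteq> Pow (Ys n) \<and> R = rect_prod S T)"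

end

theory Submission
  imports Defs "HOL-Library.Function_Algebras" "HOL-Library.Indicator_Function"
begin

text \<open>Consider the disjointness matrix \<open>D(A, B) = [A \<inter> B = {}]\<close> indexed by subsets
  \<open>A, B \<subseteq> [n]\<close>. Evaluated at the complement \<open>[n] - A\<close>, row \<open>A'\<close> is \<open>[A' \<subseteq> A]\<close>, so
  \<open>D\<close> is unitriangular with respect to inclusion and has rank \<open>2^n\<close>. Identifying
  \<open>A \<union> B\<close> with the pair \<open>(x_A, y_B)\<close>, the set \<open>L\<^sub>n\<close> is the support of \<open>J - D\<close>, so a partition
  of \<open>L\<^sub>n\<close> into \<open>k\<close> rectangles \<open>S \<times> T\<close> writes \<open>J - D\<close> as a sum of \<open>k\<close> rank-one matrices
  \<open>1\<^sub>S 1\<^sub>T\<^sup>T\<close>. Hence \<open>2^n \<le> k + 1\<close>, and \<open>c = 1/2\<close> works for \<open>n \<ge> 2\<close>.\<close>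

interpretation real_fun: vector_space "\<lambda>(c::real) (f::'a \<Rightarrow> real) x. c * f x"
  by unfold_locales (auto simp: plus_fun_def algebra_simps)

lemma sum_fun_apply: "(\<Sum>i\<in>I. g i) x = (\<Sum>i\<in>I. (g i x :: 'b::comm_monoid_add))"
  by (induction I rule: infinite_finite_induct) (auto simp: plus_fun_def zero_fun_def)

text \<open>Rows are extended by zero outside \<open>Pow I\<close>, so that they live in the vector space of
  all real functions on sets.\<close>

definition disj_row :: "'a set \<Rightarrow> 'a set \<Rightarrow> 'a set \<Rightarrow> real" where
  "disj_row I A B = of_bool (B \<subseteq> I \<and> A \<inter> B = {})"

lemma disj_row_Diff:
  assumes "A \<subseteq> I" and "A' \<subseteq> I"
  shows "disj_row I A' (I - A) = of_bool (A' \<subseteq> A)"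
  using assms unfolding disj_row_def by auto

lemma inj_on_disj_row: "inj_on (disj_row I) (Pow I)"
proof (rule inj_onI)
  fix A A' assume "A \<in> Pow I" "A' \<in> Pow I" and "disj_row I A = disj_row I A'"
  then have "of_bool (A \<subseteq> A) = (of_bool (A' \<subseteq> A) :: real)"
    and "of_bool (A' \<subseteq> A') = (of_bool (A \<subseteq> A') :: real)"
    by (metis PowD disj_row_Diff)+
  then show "A = A'" by auto
qed

lemma disj_row_coeffs_eq_0:
  assumes "finite I" and "A \<subseteq> I"
    and combination_0: "\<And>B. (\<Sum>A\<in>Pow I. u A * disj_row I A B) = 0"
  shows "u A = 0"
  using \<open>A \<subseteq> I\<close>
proof (induction "card A" arbitrary: A rule: less_induct)
  case less
  have "finite A" using less.prems \<open>finite I\<close> finite_subset by blast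
  have "0 = (\<Sum>A'\<in>Pow I. u A' * disj_row I A' (I - A))" using combination_0 by simp
  also have "\<dots> = (\<Sum>A'\<in>Pow A. u A')"
    using less.prems \<open>finite I\<close>
    by (simp add: disj_row_Diff of_bool_def if_distrib sum.If_cases) (auto intro: sum.cong)
  also have "\<dots> = u A + (\<Sum>A'\<in>Pow A - {A}. u A')"
    using \<open>finite A\<close> by (subst sum.remove[of _ A]) auto
  also have "(\<Sum>A'\<in>Pow A - {A}. u A') = 0"
  proof (rule sum.neutral, rule ballI)
    fix A' assume "A' \<in> Pow A - {A}"
    then have "A' \<subset> A" by auto
    then show "u A' = 0"
      using less psubset_card_mono[OF \<open>finite A\<close>] by (meson order.trans psubset_imp_subset)
  qed
  finally show ?case by simp
qed

lemma independent_disj_rows: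
  assumes "finite I"
  shows "real_fun.independent (disj_row I ` Pow I)"
proof (rule real_fun.independent_if_scalars_zero)
  show "finite (disj_row I ` Pow I)" using assms by simp
  fix u f assume combination_0: "(\<Sum>f\<in>disj_row I ` Pow I. (\<lambda>B. u f * f B)) = 0"
    and "f \<in> disj_row I ` Pow I"
  then obtain A where "A \<subseteq> I" "f = disj_row I A" by auto
  have "(\<Sum>A\<in>Pow I. u (disj_row I A) * disj_row I A B) = 0" for B
    using fun_cong[OF combination_0, of B]
    by (simp add: sum_fun_apply sum.reindex[OF inj_on_disj_row])
  from disj_row_coeffs_eq_0[OF assms \<open>A \<subseteq> I\<close> this] show "u f = 0"
    using \<open>f = disj_row I A\<close> by simp
qed

lemma Inl_Inr_Un_mem_rect_prod_iff:
  assumes "S \<subseteq> Pow (range Inl)" and "T \<subseteq> Pow (range Inr)"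
  shows "Inl ` A \<union> Inr ` B \<in> rect_prod S T \<longleftrightarrow> Inl ` A \<in> S \<and> Inr ` B \<in> T"
proof
  assume "Inl ` A \<union> Inr ` B \<in> rect_prod S T"
  then obtain U V where UV: "Inl ` A \<union> Inr ` B = U \<union> V" "U \<in> S" "V \<in> T"
    unfolding rect_prod_def by auto
  with assms have "U = Inl ` A" "V = Inr ` B" by blast+
  with UV show "Inl ` A \<in> S \<and> Inr ` B \<in> T" by simp
qed (auto simp: rect_prod_def)

lemma Inl_Inr_Un_mem_Lfam_iff:
  assumes "A \<subseteq> {1..n}" and "B \<subseteq> {1..n}"
  shows "Inl ` A \<union> Inr ` B \<in> Lfam n \<longleftrightarrow> A \<inter> B \<noteq> {}"
  using assms unfolding Lfam_def Zs_def Xs_def Ys_def by auto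

lemma disj_row_eq_diff_sum_rects:
  fixes F :: "(nat + nat) set set set"
  assumes "finite F" and "pairwise disjnt F" and "\<Union>F = Lfam n"
    and rects: "\<And>R. R \<in> F \<Longrightarrow>
                  S R \<subseteq> Pow (Xs n) \<and> T R \<subseteq> Pow (Ys n) \<and> R = rect_prod (S R) (T R)"
    and "A \<subseteq> {1..n}"
  shows "disj_row {1..n} A = (\<lambda>B. of_bool (B \<subseteq> {1..n}))
           - (\<Sum>R\<in>F. (\<lambda>B. of_bool (Inl ` A \<in> S R) * of_bool (B \<subseteq> {1..n} \<and> Inr ` B \<in> T R)))"
proof
  fix B
  show "disj_row {1..n} A B = ((\<lambda>B. of_bool (B \<subseteq> {1..n}))
           - (\<Sum>R\<in>F. (\<lambda>B. of_bool (Inl ` A \<in> S R) * of_bool (B \<subseteq> {1..n} \<and> Inr ` B \<in> T R)))) B"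
  proof (cases "B \<subseteq> {1..n}")
    case True
    have "disjoint_family_on id F"
      using \<open>pairwise disjnt F\<close> by (auto simp: disjoint_family_on_def pairwise_def disjnt_def)
    have "(of_bool (A \<inter> B \<noteq> {}) :: real) = indicator (Lfam n) (Inl ` A \<union> Inr ` B)"
      by (simp only: indicator_def Inl_Inr_Un_mem_Lfam_iff[OF \<open>A \<subseteq> {1..n}\<close> True])
    also have "\<dots> = (\<Sum>R\<in>F. indicator R (Inl ` A \<union> Inr ` B))"
      using indicator_UN_disjoint[OF \<open>finite F\<close> \<open>disjoint_family_on id F\<close>] \<open>\<Union>F = Lfam n\<close> by simp
    also have "\<dots> = (\<Sum>R\<in>F. of_bool (Inl ` A \<in> S R) * of_bool (Inr ` B \<in> T R))"
    proof (rule sum.cong)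
      fix R assume "R \<in> F"
      then have "S R \<subseteq> Pow (range Inl)" "T R \<subseteq> Pow (range Inr)"
        using rects unfolding Xs_def Ys_def by blast+
      then have "Inl ` A \<union> Inr ` B \<in> R \<longleftrightarrow> Inl ` A \<in> S R \<and> Inr ` B \<in> T R"
        using rects[OF \<open>R \<in> F\<close>] Inl_Inr_Un_mem_rect_prod_iff by metis
      then show "indicator R (Inl ` A \<union> Inr ` B)
                   = of_bool (Inl ` A \<in> S R) * (of_bool (Inr ` B \<in> T R) :: real)"
        by simp
    qed simp
    finally have "(\<Sum>R\<in>F. of_bool (Inl ` A \<in> S R) * of_bool (Inr ` B \<in> T R))
                    = (of_bool (A \<inter> B \<noteq> {}) :: real)"
      by (rule sym)
    with True show ?thesis
      by (simp add: disj_row_def sum_fun_apply)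
  qed (simp add: disj_row_def sum_fun_apply)
qed

lemma finite_Lfam: "finite (Lfam n)"
  unfolding Lfam_def Zs_def Xs_def Ys_def by simp

lemma card_rect_partition_Lfam:
  fixes F :: "(nat + nat) set set set"
  assumes "\<forall>R\<in>F. is_rect n R" and "pairwise disjnt F" and "\<Union>F = Lfam n"
  shows "2 ^ n \<le> card F + 1"
proof -
  obtain S T where rects: "\<And>R. R \<in> F \<Longrightarrow>
      S R \<subseteq> Pow (Xs n) \<and> T R \<subseteq> Pow (Ys n) \<and> R = rect_prod (S R) (T R)"
    using assms(1) unfolding is_rect_def by metis
  have "finite F"
    using \<open>\<Union>F = Lfam n\<close> finite_Lfam by (metis finite_UnionD)
  define col where "col R B = (of_bool (B \<subseteq> {1..n} \<and> Inr ` B \<in> T R) :: real)" for R B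
  define G where "G = insert (\<lambda>B. of_bool (B \<subseteq> {1..n})) (col ` F)"
  have rows_in_span: "disj_row {1..n} ` Pow {1..n} \<subseteq> real_fun.span G"
  proof clarify
    fix A assume "A \<subseteq> {1..n}"
    have "(\<lambda>B. of_bool (B \<subseteq> {1..n})) \<in> real_fun.span G"
      by (rule real_fun.span_base) (simp add: G_def)
    moreover have "(\<Sum>R\<in>F. (\<lambda>B. of_bool (Inl ` A \<in> S R) * col R B)) \<in> real_fun.span G"
      by (intro real_fun.span_sum real_fun.span_scale real_fun.span_base) (simp add: G_def)
    ultimately have "(\<lambda>B. of_bool (B \<subseteq> {1..n})) - (\<Sum>R\<in>F. (\<lambda>B. of_bool (Inl ` A \<in> S R) * col R B))
                 \<in> real_fun.span G"
      by (rule real_fun.span_diff)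
    then show "disj_row {1..n} A \<in> real_fun.span G"
      using disj_row_eq_diff_sum_rects[OF \<open>finite F\<close> assms(2,3) rects \<open>A \<subseteq> {1..n}\<close>]
      by (simp add: col_def)
  qed
  have "card (disj_row {1..n} ` Pow {1..n}) \<le> card G"
    using real_fun.independent_span_bound[OF _ independent_disj_rows rows_in_span] \<open>finite F\<close>
    by (simp add: G_def)
  also have "\<dots> \<le> card F + 1"
    using card_insert_le_m1[of _ "col ` F"] card_image_le[OF \<open>finite F\<close>, of col]
    by (simp add: G_def)
  finally show ?thesis
    by (simp add: card_image[OF inj_on_disj_row] card_Pow)
qed

theorem mainTheorem10:
  shows "\<exists>c::real. c > 0 \<and> (\<exists>N::nat. \<forall>n\<ge>N. \<forall>F :: (nat + nat) set set set.
           (\<forall>R\<in>F. is_rect n R) \<and> pairwise disjnt F \<and> \<Union>F = Lfam n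
           \<longrightarrow> 2 powr (c * real n) \<le> real (card F))"
proof (intro exI[of _ "1/2"] conjI exI[of _ 2] allI impI)
  fix n :: nat and F :: "(nat + nat) set set set"
  assume "2 \<le> n" and "(\<forall>R\<in>F. is_rect n R) \<and> pairwise disjnt F \<and> \<Union>F = Lfam n"
  then have "2 ^ n \<le> card F + 1"
    using card_rect_partition_Lfam by blast
  have "2 powr (1/2 * real n) \<le> 2 powr (real n - 1)"
    using \<open>2 \<le> n\<close> by (intro powr_mono) auto
  also have "\<dots> = 2 ^ n / 2"
    by (simp add: powr_diff powr_realpow)
  also have "\<dots> \<le> 2 ^ n - 1"
    using \<open>2 \<le> n\<close> power_increasing[of 1 n "2::real"] by simp
  also have "\<dots> \<le> real (card F)"
    using of_nat_mono[OF \<open>2 ^ n \<le> card F + 1\<close>, where 'a=real] by simp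
  finally show "2 powr (1/2 * real n) \<le> real (card F)" .
qed simp

end
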